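(* For every ${\bm\theta}\in\mathbb R^N$, $$P_{\cal B}P_{{\cal C}({\bm\theta})}=P_{\cal B}P_{{\cal C}(\bar{\bm\theta})}\quad\text{on } L^2(D),$$ where $\bar{\bm\theta}$ is the orthogonal projection of ${\bm\theta}$ onto $\mathrm{ran}(H)$ with respect to the inner product $\langle\cdot,\cdot\rangle_N$.
   Context: $D=\mathbb R$ or $[0,T]$ ($T$ an odd positive integer); $L^2(D)$ is the real Hilbert space with $\langle u,v\rangle=\int_D uv\,dt$. ${\cal B}$ is the closed subspace of signals bandlimited to $[-\pi,\pi]$ and $P_{\cal B}$ the orthogonal projection onto it (sinc / Dirichlet-kernel filtering). Fix $\alpha\ge0$, $N\ge1$, instants $0=t_0<t_1<\dots<t_N$ in $D$, and $h_n(t)=e^{-\alpha(t_n-t)}\mathbf 1_{[t_{n-1},t_n)}(t)$, $n=1,\dots,N$. For ${\bm\theta}\in\mathbb R^N$, ${\cal C}({\bm\theta})=\{u\in L^2(D):\langle h_n,u\rangle=\theta_n\ \forall n\}$ and $P_{{\cal C}({\bm\theta})}$ is the orthogonal projection onto this closed affine subspace. $H:{\cal B}\to\mathbb R^N$ is the linear "sampling operator" $Hu=(\langle h_n,u\rangle)_{n=1}^N$. On $\mathbb R^N$ use the weighted inner product $\langle{\mathbf u},{\mathbf v}\rangle_N=\sum_{n=1}^N u_nv_n/\|h_n\|^2$. *)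

theory Defs
  imports "HOL-Analysis.Analysis"
begin

text \<open>Signals are real functions; L2(D) is represented by square-integrable
  representatives, with equality understood almost everywhere on D.\<close>

definition L2 :: "real set \<Rightarrow> (real \<Rightarrow> real) set" where
  "L2 D = {f. f \<in> borel_measurable (lebesgue_on D) \<and>
               integrable (lebesgue_on D) (\<lambda>t. (f t)\<^sup>2)}"

definition ip :: "real set \<Rightarrow> (real \<Rightarrow> real) \<Rightarrow> (real \<Rightarrow> real) \<Rightarrow> real" where
  "ip D f g = integral\<^sup>L (lebesgue_on D) (\<lambda>t. f t * g t)"

definition nrm :: "real set \<Rightarrow> (real \<Rightarrow> real) \<Rightarrow> real" where
  "nrm D f = sqrt (ip D f f)"

definition is_proj :: "real set \<Rightarrow> (real \<Rightarrow> real) set \<Rightarrow> (real \<Rightarrow> real) \<Rightarrow> (real \<Rightarrow> real) \<Rightarrow> bool" where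
  "is_proj D K u p \<longleftrightarrow> p \<in> K \<and> (\<forall>q\<in>K. nrm D (\<lambda>t. u t - p t) \<le> nrm D (\<lambda>t. u t - q t))"

text \<open>Signals bandlimited to [-pi,pi]: on the real line the Paley--Wiener space
  (inverse Fourier transforms of L2 functions supported in [-pi,pi]); on [0,T], T odd,
  the trigonometric polynomials of period T with frequencies 2 pi k / T <= pi.\<close>
definition bandlimited :: "real set \<Rightarrow> (real \<Rightarrow> real) set" where
  "bandlimited D = {f. f \<in> L2 D \<and>
     (if D = UNIV then
        (\<exists>F :: real \<Rightarrow> complex.
           set_integrable lborel {-pi..pi} (\<lambda>\<omega>. (cmod (F \<omega>))\<^sup>2) \<and>
           set_integrable lborel {-pi..pi} F \<and>
           (AE t in lebesgue. complex_of_real (f t) =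
              (LINT \<omega>:{-pi..pi}|lborel. F \<omega> * exp (\<i> * complex_of_real (\<omega> * t)))))
      else
        (\<exists>T::nat. D = {0..real T} \<and>
          (\<exists>a b :: nat \<Rightarrow> real. AE t in lebesgue_on D.
             f t = (\<Sum>k\<le>T div 2. a k * cos (2 * pi * real k * t / real T)
                                  + b k * sin (2 * pi * real k * t / real T)))))}"

definition hfun :: "real \<Rightarrow> (nat \<Rightarrow> real) \<Rightarrow> nat \<Rightarrow> real \<Rightarrow> real" where
  "hfun \<alpha> tt n t = (if tt (n - 1) \<le> t \<and> t < tt n then exp (- \<alpha> * (tt n - t)) else 0)"

definition Cset :: "real set \<Rightarrow> real \<Rightarrow> (nat \<Rightarrow> real) \<Rightarrow> nat \<Rightarrow> (nat \<Rightarrow> real) \<Rightarrow> (real \<Rightarrow> real) set" where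
  "Cset D \<alpha> tt N \<theta> = {u \<in> L2 D. \<forall>n\<in>{1..N}. ip D (hfun \<alpha> tt n) u = \<theta> n}"

text \<open>Range of the sampling operator H on the bandlimited space (entries outside 1..N are 0).\<close>
definition ranH :: "real set \<Rightarrow> real \<Rightarrow> (nat \<Rightarrow> real) \<Rightarrow> nat \<Rightarrow> (nat \<Rightarrow> real) set" where
  "ranH D \<alpha> tt N = {v. \<exists>u\<in>bandlimited D.
       \<forall>n. v n = (if n \<in> {1..N} then ip D (hfun \<alpha> tt n) u else 0)}"

definition wnorm2 :: "real set \<Rightarrow> real \<Rightarrow> (nat \<Rightarrow> real) \<Rightarrow> nat \<Rightarrow> (nat \<Rightarrow> real) \<Rightarrow> real" where
  "wnorm2 D \<alpha> tt N v = (\<Sum>n=1..N. (v n)\<^sup>2 / (nrm D (hfun \<alpha> tt n))\<^sup>2)"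

end

theory Submission
  imports Defs
begin

text \<open>Let K be the space of signals orthogonal to every h_n. The consistent set C(theta) is a
  translate of K, so u - P_C(theta) u is orthogonal to K; hence so is p1 - p2, where p1 and p2 are
  the projections of u onto C(theta) and C(theta_bar). Expanding any b along the orthogonal family
  (h_n) then gives <p1 - p2, b> = <theta - theta_bar, Hb>_N, and this vanishes for bandlimited b
  because theta_bar is the <.,.>_N-orthogonal projection of theta onto ran H. Thus p1 - p2 is
  orthogonal to the bandlimited space, and projecting p1 and p2 onto it gives the same signal.\<close>

section \<open>Inner product on L2(D)\<close>

lemma L2_product_integrable:
  assumes "f \<in> L2 D" "g \<in> L2 D"
  shows "integrable (lebesgue_on D) (\<lambda>t. f t * g t)"
proof (rule Bochner_Integration.integrable_bound)
  show "integrable (lebesgue_on D) (\<lambda>t. (f t)\<^sup>2 + (g t)\<^sup>2)"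
    using assms unfolding L2_def by auto
  show "(\<lambda>t. f t * g t) \<in> borel_measurable (lebesgue_on D)"
    using assms unfolding L2_def by auto
  show "AE t in lebesgue_on D. norm (f t * g t) \<le> norm ((f t)\<^sup>2 + (g t)\<^sup>2)"
  proof (rule AE_I2)
    fix t
    have "2 * \<bar>f t\<bar> * \<bar>g t\<bar> \<le> (f t)\<^sup>2 + (g t)\<^sup>2"
      using sum_squares_bound[of "\<bar>f t\<bar>" "\<bar>g t\<bar>"] by simp
    moreover have "norm (f t * g t) = \<bar>f t\<bar> * \<bar>g t\<bar>" by (simp add: abs_mult)
    moreover have "0 \<le> \<bar>f t\<bar> * \<bar>g t\<bar>" by simp
    ultimately show "norm (f t * g t) \<le> norm ((f t)\<^sup>2 + (g t)\<^sup>2)" by simp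
  qed
qed

lemma L2_lincomb:
  assumes "f \<in> L2 D" "g \<in> L2 D"
  shows "(\<lambda>t. a * f t + b * g t) \<in> L2 D"
proof -
  have "integrable (lebesgue_on D) (\<lambda>t. (a * f t + b * g t)\<^sup>2)"
  proof (rule Bochner_Integration.integrable_bound)
    show "integrable (lebesgue_on D) (\<lambda>t. 2 * a\<^sup>2 * (f t)\<^sup>2 + 2 * b\<^sup>2 * (g t)\<^sup>2)"
      using assms unfolding L2_def by auto
    show "(\<lambda>t. (a * f t + b * g t)\<^sup>2) \<in> borel_measurable (lebesgue_on D)"
      using assms unfolding L2_def by auto
    show "AE t in lebesgue_on D. norm ((a * f t + b * g t)\<^sup>2) \<le> norm (2 * a\<^sup>2 * (f t)\<^sup>2 + 2 * b\<^sup>2 * (g t)\<^sup>2)"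
    proof (rule AE_I2)
      fix t
      have "2 * (a * f t) * (b * g t) \<le> (a * f t)\<^sup>2 + (b * g t)\<^sup>2"
        by (rule sum_squares_bound)
      then have "(a * f t + b * g t)\<^sup>2 \<le> 2 * a\<^sup>2 * (f t)\<^sup>2 + 2 * b\<^sup>2 * (g t)\<^sup>2"
        by (simp add: power2_sum power_mult_distrib)
      then show "norm ((a * f t + b * g t)\<^sup>2) \<le> norm (2 * a\<^sup>2 * (f t)\<^sup>2 + 2 * b\<^sup>2 * (g t)\<^sup>2)"
        by simp
    qed
  qed
  then show ?thesis using assms unfolding L2_def by auto
qed

lemma L2_diff: "f \<in> L2 D \<Longrightarrow> g \<in> L2 D \<Longrightarrow> (\<lambda>t. f t - g t) \<in> L2 D"
  using L2_lincomb[of f D g 1 "-1"] by simp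

lemma L2_add_scaled: "f \<in> L2 D \<Longrightarrow> g \<in> L2 D \<Longrightarrow> (\<lambda>t. f t + s * g t) \<in> L2 D"
  using L2_lincomb[of f D g 1 s] by simp

lemma L2_sum:
  "finite S \<Longrightarrow> (\<And>n. n \<in> S \<Longrightarrow> f n \<in> L2 D) \<Longrightarrow> (\<lambda>t. \<Sum>n\<in>S. c n * f n t) \<in> L2 D"
proof (induction S rule: finite_induct)
  case empty
  then show ?case by (simp add: L2_def)
next
  case (insert x F)
  then show ?case using L2_lincomb[of "f x" D "\<lambda>t. \<Sum>n\<in>F. c n * f n t" "c x" 1] by simp
qed

lemma ip_commute: "ip D f g = ip D g f"
  unfolding ip_def by (simp add: mult.commute)

lemma ip_lincomb:
  assumes "h \<in> L2 D" "f \<in> L2 D" "g \<in> L2 D"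
  shows "ip D h (\<lambda>t. a * f t + b * g t) = a * ip D h f + b * ip D h g"
proof -
  have "integrable (lebesgue_on D) (\<lambda>t. h t * f t)" "integrable (lebesgue_on D) (\<lambda>t. h t * g t)"
    using assms L2_product_integrable by auto
  then show ?thesis
    unfolding ip_def by (simp add: distrib_left mult.left_commute[of "h _"])
qed

lemma ip_diff: "h \<in> L2 D \<Longrightarrow> f \<in> L2 D \<Longrightarrow> g \<in> L2 D \<Longrightarrow> ip D h (\<lambda>t. f t - g t) = ip D h f - ip D h g"
  using ip_lincomb[of h D f g 1 "-1"] by simp

lemma ip_add_scaled:
  "h \<in> L2 D \<Longrightarrow> f \<in> L2 D \<Longrightarrow> g \<in> L2 D \<Longrightarrow> ip D h (\<lambda>t. f t + s * g t) = ip D h f + s * ip D h g"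
  using ip_lincomb[of h D f g 1 s] by simp

lemma ip_sum:
  assumes "finite S" "h \<in> L2 D" "\<And>n. n \<in> S \<Longrightarrow> f n \<in> L2 D"
  shows "ip D h (\<lambda>t. \<Sum>n\<in>S. c n * f n t) = (\<Sum>n\<in>S. c n * ip D h (f n))"
  using assms
proof (induction S rule: finite_induct)
  case empty
  then show ?case by (simp add: ip_def)
next
  case (insert x F)
  then have "(\<lambda>t. \<Sum>n\<in>F. c n * f n t) \<in> L2 D" by (simp add: L2_sum)
  then show ?case
    using insert ip_lincomb[of h D "f x" "\<lambda>t. \<Sum>n\<in>F. c n * f n t" "c x" 1] by simp
qed

lemma ip_self_add_scaled:
  assumes f: "f \<in> L2 D" and w: "w \<in> L2 D"
  shows "ip D (\<lambda>t. f t + s * w t) (\<lambda>t. f t + s * w t) = ip D f f + 2 * s * ip D f w + s\<^sup>2 * ip D w w"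
proof -
  let ?g = "\<lambda>t. f t + s * w t"
  have "ip D ?g ?g = ip D ?g f + s * ip D ?g w"
    using L2_add_scaled[OF f w] f w by (rule ip_add_scaled)
  also have "ip D ?g f = ip D f f + s * ip D f w"
    using ip_add_scaled[OF f f w] by (simp add: ip_commute[of D ?g])
  also have "ip D ?g w = ip D f w + s * ip D w w"
    using ip_add_scaled[OF w f w] by (simp add: ip_commute[of D ?g] ip_commute[of D w f])
  finally show ?thesis by (simp add: power2_eq_square algebra_simps)
qed

lemma ip_self_nonneg: "0 \<le> ip D f f"
  unfolding ip_def by (simp add: integral_nonneg_AE)

lemma nrm_squared: "(nrm D f)\<^sup>2 = ip D f f"
  unfolding nrm_def using ip_self_nonneg by simp

lemma AE_zero_if_ip_self_eq_0:
  assumes "f \<in> L2 D" "ip D f f = 0"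
  shows "AE t in lebesgue_on D. f t = 0"
proof -
  have "AE t in lebesgue_on D. f t * f t = 0"
    using L2_product_integrable[OF assms(1,1)] assms(2)
    unfolding ip_def by (subst (asm) integral_nonneg_eq_0_iff_AE) auto
  then show ?thesis by simp
qed

lemma ip_eq_0_if_ip_self_eq_0:
  assumes "f \<in> L2 D" "ip D f f = 0" "g \<in> L2 D"
  shows "ip D f g = 0"
proof -
  have "AE t in lebesgue_on D. f t * g t = 0"
    using AE_zero_if_ip_self_eq_0[OF assms(1,2)] by eventually_elim simp
  then show ?thesis
    unfolding ip_def by (simp add: integral_eq_zero_AE)
qed

section \<open>Orthogonal projections\<close>

lemma linear_coeff_zero_if_quadratic_nonneg:
  fixes a c :: real
  assumes nonneg: "\<And>s. 0 \<le> s\<^sup>2 * c - 2 * s * a" and c: "c \<ge> 0"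
  shows "a = 0"
proof -
  define s where "s = a / (c + 1)"
  have sa: "s * (c + 1) = a" unfolding s_def using c by simp
  have "(s\<^sup>2 * c - 2 * s * a) * (c + 1)\<^sup>2 = (s * (c + 1))\<^sup>2 * c - 2 * (s * (c + 1)) * a * (c + 1)"
    by (simp add: algebra_simps power2_eq_square)
  also have "\<dots> = - (a\<^sup>2 * (c + 2))"
    unfolding sa by (simp add: algebra_simps power2_eq_square)
  finally have "(s\<^sup>2 * c - 2 * s * a) * (c + 1)\<^sup>2 = - (a\<^sup>2 * (c + 2))" .
  moreover have "0 \<le> (s\<^sup>2 * c - 2 * s * a) * (c + 1)\<^sup>2" using nonneg by simp
  ultimately have "a\<^sup>2 * (c + 2) \<le> 0" by simp
  then show ?thesis using c by (smt (verit) mult_pos_pos zero_less_power2)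
qed

lemma is_proj_orthogonal:
  assumes u: "u \<in> L2 D" and p: "p \<in> L2 D" and w: "w \<in> L2 D" and proj: "is_proj D K u p"
    and K: "\<And>s. (\<lambda>t. p t + s * w t) \<in> K"
  shows "ip D (\<lambda>t. u t - p t) w = 0"
proof -
  define f where "f = (\<lambda>t. u t - p t)"
  have f: "f \<in> L2 D" unfolding f_def using u p by (rule L2_diff)
  have "0 \<le> s\<^sup>2 * ip D w w - 2 * s * ip D f w" for s
  proof -
    have "nrm D f \<le> nrm D (\<lambda>t. f t + (- s) * w t)"
      using proj K[of s] unfolding is_proj_def f_def by (simp add: algebra_simps)
    then have "ip D f f \<le> ip D (\<lambda>t. f t + (- s) * w t) (\<lambda>t. f t + (- s) * w t)"
      unfolding nrm_def by (simp add: ip_self_nonneg)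
    then show ?thesis using ip_self_add_scaled[OF f w, of "- s"] by simp
  qed
  then show ?thesis
    unfolding f_def[symmetric] by (rule linear_coeff_zero_if_quadratic_nonneg[OF _ ip_self_nonneg])
qed

lemma is_proj_subspace_AE_eq:
  assumes V: "V \<subseteq> L2 D" "\<And>f g s. f \<in> V \<Longrightarrow> g \<in> V \<Longrightarrow> (\<lambda>t. f t + s * g t) \<in> V"
    and p: "p1 \<in> L2 D" "p2 \<in> L2 D"
    and orth: "\<And>b. b \<in> V \<Longrightarrow> ip D (\<lambda>t. p1 t - p2 t) b = 0"
    and Q1: "is_proj D V p1 q1" and Q2: "is_proj D V p2 q2"
  shows "AE t in lebesgue_on D. q1 t = q2 t"
proof -
  have q: "q1 \<in> V" "q2 \<in> V" using Q1 Q2 unfolding is_proj_def by auto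
  have resid: "ip D (\<lambda>t. p t - q t) b = 0"
    if "p \<in> L2 D" "is_proj D V p q" "q \<in> V" "b \<in> V" for p q b
    using is_proj_orthogonal[OF that(1) _ _ that(2)] that V by blast
  define r where "r = (\<lambda>t. q1 t + (- 1) * q2 t)"
  have r: "r \<in> V" unfolding r_def using V(2) q by blast
  have L: "r \<in> L2 D" "q1 \<in> L2 D" "q2 \<in> L2 D" using r q V by auto
  have "ip D r r = ip D r (\<lambda>t. (p1 t - p2 t) - (p1 t - q1 t) + 1 * (p2 t - q2 t))"
    by (rule arg_cong[where f = "ip D r"]) (auto simp: r_def)
  also have "\<dots> = ip D r (\<lambda>t. p1 t - p2 t) - ip D r (\<lambda>t. p1 t - q1 t) + ip D r (\<lambda>t. p2 t - q2 t)"
    using L p by (simp add: L2_diff ip_add_scaled ip_diff)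
  also have "\<dots> = 0"
    using orth[OF r] resid[OF p(1) Q1 q(1) r] resid[OF p(2) Q2 q(2) r] by (simp add: ip_commute)
  finally have "AE t in lebesgue_on D. r t = 0" using AE_zero_if_ip_self_eq_0[OF L(1)] by simp
  then show ?thesis unfolding r_def by eventually_elim simp
qed

lemma orthogonal_family_residual:
  assumes I: "finite I" and h: "\<And>n. n \<in> I \<Longrightarrow> h n \<in> L2 D"
    and orth: "\<And>m n. m \<in> I \<Longrightarrow> n \<in> I \<Longrightarrow> m \<noteq> n \<Longrightarrow> ip D (h m) (h n) = 0"
    and b: "b \<in> L2 D" and m: "m \<in> I"
  shows "ip D (h m) (\<lambda>t. b t - (\<Sum>n\<in>I. ip D (h n) b / (nrm D (h n))\<^sup>2 * h n t)) = 0"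
proof -
  let ?c = "\<lambda>n. ip D (h n) b / (nrm D (h n))\<^sup>2"
  have others: "(\<Sum>n\<in>I - {m}. ?c n * ip D (h m) (h n)) = 0"
    using m orth by (intro sum.neutral) auto
  have "ip D (h m) (\<lambda>t. \<Sum>n\<in>I. ?c n * h n t) = (\<Sum>n\<in>I. ?c n * ip D (h m) (h n))"
    by (rule ip_sum[OF I h[OF m] h])
  also have "\<dots> = ?c m * ip D (h m) (h m)"
    unfolding sum.remove[OF I m] others by simp
  also have "\<dots> = ip D (h m) b"
  proof (cases "ip D (h m) (h m) = 0")
    \<comment> \<open>a null h m gets the junk coefficient x / 0 = 0, harmless as then ip D (h m) b = 0\<close>
    case True
    then show ?thesis using ip_eq_0_if_ip_self_eq_0[OF h[OF m] True b] by simp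
  qed (simp add: nrm_squared)
  finally show ?thesis
    using ip_diff[OF h[OF m] b L2_sum[OF I h, where c = ?c]] by simp
qed

lemma ip_orthogonal_family_expansion:
  assumes I: "finite I" and h: "\<And>n. n \<in> I \<Longrightarrow> h n \<in> L2 D"
    and orth: "\<And>m n. m \<in> I \<Longrightarrow> n \<in> I \<Longrightarrow> m \<noteq> n \<Longrightarrow> ip D (h m) (h n) = 0"
    and b: "b \<in> L2 D" and f: "f \<in> L2 D"
    and f_orth: "\<And>w. w \<in> L2 D \<Longrightarrow> (\<And>n. n \<in> I \<Longrightarrow> ip D (h n) w = 0) \<Longrightarrow> ip D f w = 0"
  shows "ip D f b = (\<Sum>n\<in>I. ip D f (h n) * ip D (h n) b / (nrm D (h n))\<^sup>2)"
proof -
  let ?S = "\<lambda>t. \<Sum>n\<in>I. ip D (h n) b / (nrm D (h n))\<^sup>2 * h n t"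
  have S: "?S \<in> L2 D" using I h by (rule L2_sum)
  have "ip D f (\<lambda>t. b t - ?S t) = 0"
    using f_orth L2_diff[OF b S] orthogonal_family_residual[where h = h, OF I h orth b] by blast
  then have "ip D f b = ip D f ?S" using ip_diff[OF f b S] by simp
  also have "\<dots> = (\<Sum>n\<in>I. ip D (h n) b / (nrm D (h n))\<^sup>2 * ip D f (h n))"
    using I f h by (rule ip_sum)
  finally show ?thesis by (simp add: mult.commute)
qed

lemma hfun_borel_measurable: "hfun \<alpha> tt n \<in> borel_measurable (lebesgue_on D)"
proof -
  have "hfun \<alpha> tt n = (\<lambda>t. indicator {tt (n - 1)..<tt n} t * exp (- \<alpha> * (tt n - t)))"
    unfolding hfun_def by (auto simp: indicator_def)
  also have "\<dots> \<in> borel_measurable borel"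
    by (intro borel_measurable_times borel_measurable_continuous_onI continuous_intros
        borel_measurable_indicator) simp
  finally have "hfun \<alpha> tt n \<in> borel_measurable lebesgue"
    by (intro measurable_completion) simp
  then show ?thesis by (rule measurable_restrict_space1)
qed

lemma hfun_L2:
  assumes D: "is_interval D" "tt (n - 1) \<in> D" "tt n \<in> D" and \<alpha>: "\<alpha> \<ge> 0"
  shows "hfun \<alpha> tt n \<in> L2 D"
proof -
  let ?S = "{tt (n - 1)..tt n}"
  have Dm: "D \<in> sets lebesgue" using real_interval_borel_measurable[OF D(1)] by simp
  have sub: "?S \<subseteq> D" using D unfolding is_interval_1 by (meson atLeastAtMost_iff subsetI)
  have "?S \<in> sets (lebesgue_on D)" using sub Dm by (simp add: sets_restrict_space_iff)
  moreover have "emeasure (lebesgue_on D) ?S = emeasure lebesgue ?S"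
    using sub Dm by (simp add: emeasure_restrict_space)
  then have "emeasure (lebesgue_on D) ?S < \<infinity>" by (simp add: emeasure_lborel_Icc_eq)
  ultimately have "integrable (lebesgue_on D) (indicator ?S :: real \<Rightarrow> real)" by simp
  then have "integrable (lebesgue_on D) (\<lambda>t. (hfun \<alpha> tt n t)\<^sup>2)"
  proof (rule Bochner_Integration.integrable_bound)
    show "(\<lambda>t. (hfun \<alpha> tt n t)\<^sup>2) \<in> borel_measurable (lebesgue_on D)"
      using hfun_borel_measurable by (rule borel_measurable_power)
    have "(hfun \<alpha> tt n t)\<^sup>2 \<le> indicator ?S t" for t
    proof (cases "tt (n - 1) \<le> t \<and> t < tt n")
      case True
      then have "exp (- \<alpha> * (tt n - t)) \<le> 1" using \<alpha> by simp
      then have "(exp (- \<alpha> * (tt n - t)))\<^sup>2 \<le> 1" by (simp add: power_le_one)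
      then show ?thesis using True unfolding hfun_def by (simp add: indicator_def)
    next
      case False
      then have "hfun \<alpha> tt n t = 0" unfolding hfun_def by auto
      then show ?thesis by simp
    qed
    then show "AE t in lebesgue_on D. norm ((hfun \<alpha> tt n t)\<^sup>2) \<le> norm (indicator ?S t :: real)"
      by simp
  qed
  then show ?thesis unfolding L2_def using hfun_borel_measurable by auto
qed

lemma hfun_orthogonal:
  assumes mono: "\<And>n. n < N \<Longrightarrow> tt n < tt (Suc n)"
    and mn: "m \<in> {1..N}" "n \<in> {1..N}" "m \<noteq> n"
  shows "ip D (hfun \<alpha> tt m) (hfun \<alpha> tt n) = 0"
proof -
  have le: "tt i \<le> tt j" if "i \<le> j" "j \<le> N" for i j
    using lift_Suc_mono_le_ivl[of "{..<N}" tt i j] mono that by fastforce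
  have disjoint: "hfun \<alpha> tt m t * hfun \<alpha> tt n t = 0" for t
  proof (cases "m < n")
    case True
    then have "tt m \<le> tt (n - 1)" using le mn by auto
    then show ?thesis unfolding hfun_def by auto
  next
    case False
    then have "tt n \<le> tt (m - 1)" using le mn by auto
    then show ?thesis unfolding hfun_def by auto
  qed
  then show ?thesis unfolding ip_def by (simp only: disjoint) simp
qed

section \<open>Bandlimited signals\<close>

lemma set_integrable_mult_exp_i:
  assumes "set_integrable lborel A (F :: real \<Rightarrow> complex)"
  shows "set_integrable lborel A (\<lambda>\<omega>. F \<omega> * exp (\<i> * complex_of_real (\<omega> * t)))"
proof (rule set_integrable_bound[OF assms])
  have "(\<lambda>\<omega>. (indicator A \<omega> *\<^sub>R F \<omega>) * exp (\<i> * complex_of_real (\<omega> * t))) \<in> borel_measurable lborel"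
    using assms unfolding set_integrable_def
    by (intro borel_measurable_times borel_measurable_continuous_onI continuous_intros)
      (auto dest: borel_measurable_integrable)
  then show "set_borel_measurable lborel A (\<lambda>\<omega>. F \<omega> * exp (\<i> * complex_of_real (\<omega> * t)))"
    unfolding set_borel_measurable_def by (simp add: mult.assoc)
  show "AE \<omega> in lborel. \<omega> \<in> A \<longrightarrow> norm (F \<omega> * exp (\<i> * complex_of_real (\<omega> * t))) \<le> norm (F \<omega>)"
    by (simp add: norm_mult)
qed

lemma set_integrable_norm_sq_add_scaled:
  assumes F: "set_integrable lborel A (F :: real \<Rightarrow> complex)" and G: "set_integrable lborel A G"
    and F2: "set_integrable lborel A (\<lambda>\<omega>. (cmod (F \<omega>))\<^sup>2)"
    and G2: "set_integrable lborel A (\<lambda>\<omega>. (cmod (G \<omega>))\<^sup>2)"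
  shows "set_integrable lborel A (\<lambda>\<omega>. (cmod (F \<omega> + complex_of_real s * G \<omega>))\<^sup>2)"
proof (rule set_integrable_bound)
  show "set_integrable lborel A (\<lambda>\<omega>. 2 * (cmod (F \<omega>))\<^sup>2 + 2 * s\<^sup>2 * (cmod (G \<omega>))\<^sup>2)"
    using F2 G2 by (intro set_integral_add set_integrable_mult_right) auto
  have "set_integrable lborel A (\<lambda>\<omega>. F \<omega> + complex_of_real s * G \<omega>)"
    using F G by (intro set_integral_add) auto
  then have "(\<lambda>\<omega>. indicator A \<omega> *\<^sub>R (F \<omega> + complex_of_real s * G \<omega>)) \<in> borel_measurable lborel"
    unfolding set_integrable_def by (rule borel_measurable_integrable)
  then have "(\<lambda>\<omega>. (cmod (indicator A \<omega> *\<^sub>R (F \<omega> + complex_of_real s * G \<omega>)))\<^sup>2) \<in> borel_measurable lborel"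
    by measurable
  then show "set_borel_measurable lborel A (\<lambda>\<omega>. (cmod (F \<omega> + complex_of_real s * G \<omega>))\<^sup>2)"
    unfolding set_borel_measurable_def
    by (rule measurable_cong[THEN iffD1, rotated]) (simp add: indicator_def)
  show "AE \<omega> in lborel. \<omega> \<in> A \<longrightarrow> norm ((cmod (F \<omega> + complex_of_real s * G \<omega>))\<^sup>2)
      \<le> norm (2 * (cmod (F \<omega>))\<^sup>2 + 2 * s\<^sup>2 * (cmod (G \<omega>))\<^sup>2)"
  proof (intro AE_I2 impI)
    fix \<omega>
    have "cmod (F \<omega> + complex_of_real s * G \<omega>) \<le> cmod (F \<omega>) + \<bar>s\<bar> * cmod (G \<omega>)"
      using norm_triangle_ineq[of "F \<omega>" "complex_of_real s * G \<omega>"] by (simp add: norm_mult)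
    then have "(cmod (F \<omega> + complex_of_real s * G \<omega>))\<^sup>2 \<le> (cmod (F \<omega>) + \<bar>s\<bar> * cmod (G \<omega>))\<^sup>2"
      by (simp add: power_mono)
    also have "\<dots> \<le> 2 * (cmod (F \<omega>))\<^sup>2 + 2 * s\<^sup>2 * (cmod (G \<omega>))\<^sup>2"
      using sum_squares_bound[of "cmod (F \<omega>)" "\<bar>s\<bar> * cmod (G \<omega>)"]
      by (simp add: power2_sum power_mult_distrib)
    finally show "norm ((cmod (F \<omega> + complex_of_real s * G \<omega>))\<^sup>2)
      \<le> norm (2 * (cmod (F \<omega>))\<^sup>2 + 2 * s\<^sup>2 * (cmod (G \<omega>))\<^sup>2)" by simp
  qed
qed

lemma fourier_integral_add_scaled:
  assumes F: "set_integrable lborel A (F :: real \<Rightarrow> complex)" and G: "set_integrable lborel A G"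
  shows "(LINT \<omega>:A|lborel. (F \<omega> + complex_of_real s * G \<omega>) * exp (\<i> * complex_of_real (\<omega> * t)))
    = (LINT \<omega>:A|lborel. F \<omega> * exp (\<i> * complex_of_real (\<omega> * t)))
      + complex_of_real s * (LINT \<omega>:A|lborel. G \<omega> * exp (\<i> * complex_of_real (\<omega> * t)))"
proof -
  have "(LINT \<omega>:A|lborel. (F \<omega> + complex_of_real s * G \<omega>) * exp (\<i> * complex_of_real (\<omega> * t)))
    = (LINT \<omega>:A|lborel. F \<omega> * exp (\<i> * complex_of_real (\<omega> * t))
        + complex_of_real s * (G \<omega> * exp (\<i> * complex_of_real (\<omega> * t))))"
    by (simp add: algebra_simps)
  also have "\<dots> = (LINT \<omega>:A|lborel. F \<omega> * exp (\<i> * complex_of_real (\<omega> * t)))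
      + (LINT \<omega>:A|lborel. complex_of_real s * (G \<omega> * exp (\<i> * complex_of_real (\<omega> * t))))"
    using set_integrable_mult_exp_i[OF F] set_integrable_mult_exp_i[OF G]
    by (intro set_integral_add(2)) auto
  finally show ?thesis by simp
qed

lemma AE_finite_expansion_add_scaled:
  fixes f g :: "'a \<Rightarrow> real"
  assumes "AE t in M. f t = (\<Sum>k\<in>K. a k * c k t + b k * d k t)"
    and "AE t in M. g t = (\<Sum>k\<in>K. a' k * c k t + b' k * d k t)"
  shows "\<exists>a'' b''. AE t in M. f t + s * g t = (\<Sum>k\<in>K. a'' k * c k t + b'' k * d k t)"
proof (intro exI)
  show "AE t in M. f t + s * g t
      = (\<Sum>k\<in>K. (a k + s * a' k) * c k t + (b k + s * b' k) * d k t)"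
    using assms by eventually_elim (simp add: sum.distrib sum_distrib_left algebra_simps)
qed

lemma bandlimited_L2: "f \<in> bandlimited D \<Longrightarrow> f \<in> L2 D"
  unfolding bandlimited_def by auto

lemma bandlimited_add_scaled:
  assumes f: "f \<in> bandlimited D" and g: "g \<in> bandlimited D"
  shows "(\<lambda>t. f t + s * g t) \<in> bandlimited D"
proof -
  have L: "(\<lambda>t. f t + s * g t) \<in> L2 D"
    using bandlimited_L2[OF f] bandlimited_L2[OF g] by (rule L2_add_scaled)
  show ?thesis
  proof (cases "D = UNIV")
    case True
    obtain F where F2: "set_integrable lborel {-pi..pi} (\<lambda>\<omega>. (cmod (F \<omega>))\<^sup>2)"
      and F: "set_integrable lborel {-pi..pi} F"
      and Fae: "AE t in lebesgue. complex_of_real (f t) =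
              (LINT \<omega>:{-pi..pi}|lborel. F \<omega> * exp (\<i> * complex_of_real (\<omega> * t)))"
      using f True unfolding bandlimited_def by auto
    obtain G where G2: "set_integrable lborel {-pi..pi} (\<lambda>\<omega>. (cmod (G \<omega>))\<^sup>2)"
      and G: "set_integrable lborel {-pi..pi} G"
      and Gae: "AE t in lebesgue. complex_of_real (g t) =
              (LINT \<omega>:{-pi..pi}|lborel. G \<omega> * exp (\<i> * complex_of_real (\<omega> * t)))"
      using g True unfolding bandlimited_def by auto
    let ?H = "\<lambda>\<omega>. F \<omega> + complex_of_real s * G \<omega>"
    have "AE t in lebesgue. complex_of_real (f t + s * g t) =
        (LINT \<omega>:{-pi..pi}|lborel. ?H \<omega> * exp (\<i> * complex_of_real (\<omega> * t)))"
      using Fae Gae by eventually_elim (simp only: fourier_integral_add_scaled[OF F G], simp)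
    moreover have "set_integrable lborel {-pi..pi} ?H"
      using F G by (intro set_integral_add) auto
    ultimately show ?thesis
      unfolding bandlimited_def using True L set_integrable_norm_sq_add_scaled[OF F G F2 G2, of s]
      by (simp only: simp_thms if_True mem_Collect_eq) (intro conjI exI[of _ ?H]; assumption)
  next
    case False
    obtain T a b where T: "D = {0..real T}" and fT: "AE t in lebesgue_on D.
        f t = (\<Sum>k\<le>T div 2. a k * cos (2 * pi * real k * t / real T)
                              + b k * sin (2 * pi * real k * t / real T))"
      using f False unfolding bandlimited_def by auto
    obtain T' a' b' where T': "D = {0..real T'}" and gT': "AE t in lebesgue_on D.
        g t = (\<Sum>k\<le>T' div 2. a' k * cos (2 * pi * real k * t / real T')
                               + b' k * sin (2 * pi * real k * t / real T'))"
      using g False unfolding bandlimited_def by auto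
    have "T' = T" using T T' by simp
    then obtain a'' b'' where "AE t in lebesgue_on D.
        f t + s * g t = (\<Sum>k\<le>T div 2. a'' k * cos (2 * pi * real k * t / real T)
                                      + b'' k * sin (2 * pi * real k * t / real T))"
      using AE_finite_expansion_add_scaled[OF fT gT'[unfolded \<open>T' = T\<close>]] by blast
    then show ?thesis unfolding bandlimited_def using False T L by (simp only: if_False CollectI) blast
  qed
qed

section \<open>Consistent sets and the range of the sampling operator\<close>

lemma Cset_add_scaled:
  assumes p: "p \<in> Cset D \<alpha> tt N \<theta>" and w: "w \<in> L2 D"
    and h: "\<And>n. n \<in> {1..N} \<Longrightarrow> hfun \<alpha> tt n \<in> L2 D"
    and w_orth: "\<And>n. n \<in> {1..N} \<Longrightarrow> ip D (hfun \<alpha> tt n) w = 0"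
  shows "(\<lambda>t. p t + s * w t) \<in> Cset D \<alpha> tt N \<theta>"
proof -
  have pL: "p \<in> L2 D" and p\<theta>: "\<And>n. n \<in> {1..N} \<Longrightarrow> ip D (hfun \<alpha> tt n) p = \<theta> n"
    using p unfolding Cset_def by auto
  show ?thesis
    unfolding Cset_def using L2_add_scaled[OF pL w] ip_add_scaled[OF h pL w] p\<theta> w_orth by simp
qed

lemma is_proj_Cset_diff_expansion:
  assumes u: "u \<in> L2 D"
    and h: "\<And>n. n \<in> {1..N} \<Longrightarrow> hfun \<alpha> tt n \<in> L2 D"
    and orth: "\<And>m n. m \<in> {1..N} \<Longrightarrow> n \<in> {1..N} \<Longrightarrow> m \<noteq> n \<Longrightarrow>
      ip D (hfun \<alpha> tt m) (hfun \<alpha> tt n) = 0"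
    and P1: "is_proj D (Cset D \<alpha> tt N \<theta>) u p1" and P2: "is_proj D (Cset D \<alpha> tt N \<theta>') u p2"
    and b: "b \<in> L2 D"
  shows "ip D (\<lambda>t. p1 t - p2 t) b
    = (\<Sum>n\<in>{1..N}. (\<theta> n - \<theta>' n) * ip D (hfun \<alpha> tt n) b / (nrm D (hfun \<alpha> tt n))\<^sup>2)"
proof -
  have C: "p1 \<in> Cset D \<alpha> tt N \<theta>" "p2 \<in> Cset D \<alpha> tt N \<theta>'" using P1 P2 unfolding is_proj_def by auto
  then have p: "p1 \<in> L2 D" "p2 \<in> L2 D" unfolding Cset_def by auto
  have resid: "ip D (\<lambda>t. u t - p t) w = 0"
    if P: "is_proj D (Cset D \<alpha> tt N \<eta>) u p" and w: "w \<in> L2 D"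
      and w_orth: "\<And>n. n \<in> {1..N} \<Longrightarrow> ip D (hfun \<alpha> tt n) w = 0" for p \<eta> w
  proof -
    have pC: "p \<in> Cset D \<alpha> tt N \<eta>" using P unfolding is_proj_def by auto
    then have "p \<in> L2 D" unfolding Cset_def by auto
    then show ?thesis by (rule is_proj_orthogonal[OF u _ w P Cset_add_scaled[OF pC w h w_orth]])
  qed
  have "ip D (\<lambda>t. p1 t - p2 t) w = 0"
    if w: "w \<in> L2 D" and w_orth: "\<And>n. n \<in> {1..N} \<Longrightarrow> ip D (hfun \<alpha> tt n) w = 0" for w
  proof -
    have "ip D w (\<lambda>t. (u t - p2 t) - (u t - p1 t))
        = ip D w (\<lambda>t. u t - p2 t) - ip D w (\<lambda>t. u t - p1 t)"
      using w u p by (simp add: ip_diff L2_diff)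
    then show ?thesis
      using resid[OF P1 w w_orth] resid[OF P2 w w_orth] by (simp add: ip_commute[of D w])
  qed
  then have "ip D (\<lambda>t. p1 t - p2 t) b = (\<Sum>n\<in>{1..N}.
      ip D (\<lambda>t. p1 t - p2 t) (hfun \<alpha> tt n) * ip D (hfun \<alpha> tt n) b / (nrm D (hfun \<alpha> tt n))\<^sup>2)"
    using h orth b L2_diff[OF p] by (intro ip_orthogonal_family_expansion) auto
  also have "\<dots> = (\<Sum>n\<in>{1..N}. (\<theta> n - \<theta>' n) * ip D (hfun \<alpha> tt n) b / (nrm D (hfun \<alpha> tt n))\<^sup>2)"
  proof (rule sum.cong[OF refl])
    fix n assume n: "n \<in> {1..N}"
    have "ip D (\<lambda>t. p1 t - p2 t) (hfun \<alpha> tt n) = \<theta> n - \<theta>' n"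
      using ip_diff[OF h[OF n] p] C n unfolding Cset_def by (simp add: ip_commute)
    then show "ip D (\<lambda>t. p1 t - p2 t) (hfun \<alpha> tt n) * ip D (hfun \<alpha> tt n) b / (nrm D (hfun \<alpha> tt n))\<^sup>2
      = (\<theta> n - \<theta>' n) * ip D (hfun \<alpha> tt n) b / (nrm D (hfun \<alpha> tt n))\<^sup>2" by simp
  qed
  finally show ?thesis .
qed

lemma wnorm2_minimizer_orthogonal:
  assumes min: "\<And>s. wnorm2 D \<alpha> tt N (\<lambda>n. \<theta> n - \<theta>bar n)
      \<le> wnorm2 D \<alpha> tt N (\<lambda>n. \<theta> n - (\<theta>bar n + s * e n))"
  shows "(\<Sum>n\<in>{1..N}. (\<theta> n - \<theta>bar n) * e n / (nrm D (hfun \<alpha> tt n))\<^sup>2) = 0"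
proof -
  let ?w = "\<lambda>n. (nrm D (hfun \<alpha> tt n))\<^sup>2"
  let ?a = "\<Sum>n\<in>{1..N}. (\<theta> n - \<theta>bar n) * e n / ?w n"
  let ?c = "\<Sum>n\<in>{1..N}. (e n)\<^sup>2 / ?w n"
  have "wnorm2 D \<alpha> tt N (\<lambda>n. \<theta> n - (\<theta>bar n + s * e n))
      = wnorm2 D \<alpha> tt N (\<lambda>n. \<theta> n - \<theta>bar n) - 2 * s * ?a + s\<^sup>2 * ?c" for s
  proof -
    have "wnorm2 D \<alpha> tt N (\<lambda>n. \<theta> n - (\<theta>bar n + s * e n)) = (\<Sum>n\<in>{1..N}.
        (\<theta> n - \<theta>bar n)\<^sup>2 / ?w n - 2 * s * ((\<theta> n - \<theta>bar n) * e n / ?w n) + s\<^sup>2 * ((e n)\<^sup>2 / ?w n))"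
      unfolding wnorm2_def divide_inverse
      by (intro sum.cong) (simp_all add: power2_eq_square algebra_simps)
    also have "\<dots> = wnorm2 D \<alpha> tt N (\<lambda>n. \<theta> n - \<theta>bar n) - 2 * s * ?a + s\<^sup>2 * ?c"
      unfolding wnorm2_def by (simp only: sum.distrib sum_subtractf sum_distrib_left[symmetric])
    finally show ?thesis .
  qed
  then have "0 \<le> s\<^sup>2 * ?c - 2 * s * ?a" for s using min[of s] by simp
  moreover have "?c \<ge> 0" by (intro sum_nonneg) simp
  ultimately show ?thesis by (rule linear_coeff_zero_if_quadratic_nonneg)
qed

lemma ranH_add_scaled:
  assumes v: "v \<in> ranH D \<alpha> tt N" and b: "b \<in> bandlimited D"
    and h: "\<And>n. n \<in> {1..N} \<Longrightarrow> hfun \<alpha> tt n \<in> L2 D"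
  shows "(\<lambda>n. v n + s * (if n \<in> {1..N} then ip D (hfun \<alpha> tt n) b else 0)) \<in> ranH D \<alpha> tt N"
proof -
  obtain u where u: "u \<in> bandlimited D"
    and v_eq: "\<And>n. v n = (if n \<in> {1..N} then ip D (hfun \<alpha> tt n) u else 0)"
    using v unfolding ranH_def by auto
  have "(\<lambda>t. u t + s * b t) \<in> bandlimited D" using u b by (rule bandlimited_add_scaled)
  moreover have "ip D (hfun \<alpha> tt n) (\<lambda>t. u t + s * b t) = ip D (hfun \<alpha> tt n) u + s * ip D (hfun \<alpha> tt n) b"
    if "n \<in> {1..N}" for n
    using h[OF that] bandlimited_L2[OF u] bandlimited_L2[OF b] by (rule ip_add_scaled)
  ultimately show ?thesis
    unfolding ranH_def by (auto simp: v_eq intro!: bexI[where x = "\<lambda>t. u t + s * b t"])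
qed

lemma is_proj_Cset_diff_orthogonal_bandlimited:
  assumes u: "u \<in> L2 D"
    and h: "\<And>n. n \<in> {1..N} \<Longrightarrow> hfun \<alpha> tt n \<in> L2 D"
    and orth: "\<And>m n. m \<in> {1..N} \<Longrightarrow> n \<in> {1..N} \<Longrightarrow> m \<noteq> n \<Longrightarrow>
      ip D (hfun \<alpha> tt m) (hfun \<alpha> tt n) = 0"
    and least_squares: "\<theta>bar \<in> ranH D \<alpha> tt N \<and>
       (\<forall>v\<in>ranH D \<alpha> tt N. wnorm2 D \<alpha> tt N (\<lambda>n. \<theta> n - \<theta>bar n) \<le> wnorm2 D \<alpha> tt N (\<lambda>n. \<theta> n - v n))"
    and P1: "is_proj D (Cset D \<alpha> tt N \<theta>) u p1" and P2: "is_proj D (Cset D \<alpha> tt N \<theta>bar) u p2"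
    and b: "b \<in> bandlimited D"
  shows "ip D (\<lambda>t. p1 t - p2 t) b = 0"
proof -
  define e where "e n = (if n \<in> {1..N} then ip D (hfun \<alpha> tt n) b else 0)" for n
  have "wnorm2 D \<alpha> tt N (\<lambda>n. \<theta> n - \<theta>bar n) \<le> wnorm2 D \<alpha> tt N (\<lambda>n. \<theta> n - (\<theta>bar n + s * e n))"
    for s
  proof -
    have "(\<lambda>n. \<theta>bar n + s * e n) \<in> ranH D \<alpha> tt N"
      unfolding e_def by (rule ranH_add_scaled[OF conjunct1[OF least_squares] b h])
    then show ?thesis by (rule bspec[OF conjunct2[OF least_squares]])
  qed
  then have e_orth: "(\<Sum>n\<in>{1..N}. (\<theta> n - \<theta>bar n) * e n / (nrm D (hfun \<alpha> tt n))\<^sup>2) = 0"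
    by (rule wnorm2_minimizer_orthogonal)
  have "ip D (\<lambda>t. p1 t - p2 t) b
      = (\<Sum>n\<in>{1..N}. (\<theta> n - \<theta>bar n) * ip D (hfun \<alpha> tt n) b / (nrm D (hfun \<alpha> tt n))\<^sup>2)"
    by (rule is_proj_Cset_diff_expansion[OF u h orth P1 P2 bandlimited_L2[OF b]])
  also have "\<dots> = (\<Sum>n\<in>{1..N}. (\<theta> n - \<theta>bar n) * e n / (nrm D (hfun \<alpha> tt n))\<^sup>2)"
    by (rule sum.cong) (simp_all add: e_def)
  finally show ?thesis using e_orth by simp
qed

theorem proposition1:
  fixes D :: "real set" and \<alpha> :: real and N :: nat and tt :: "nat \<Rightarrow> real"
    and \<theta> \<theta>bar :: "nat \<Rightarrow> real"
  assumes hD: "D = UNIV \<or> (\<exists>T::nat. odd T \<and> D = {0..real T})"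
    and h\<alpha>: "\<alpha> \<ge> 0" and hN: "N \<ge> 1"
    and ht0: "tt 0 = 0"
    and htmono: "\<And>n. n < N \<Longrightarrow> tt n < tt (Suc n)"
    and htD: "\<And>n. n \<le> N \<Longrightarrow> tt n \<in> D"
    and hbar: "\<theta>bar \<in> ranH D \<alpha> tt N \<and>
       (\<forall>v\<in>ranH D \<alpha> tt N. wnorm2 D \<alpha> tt N (\<lambda>n. \<theta> n - \<theta>bar n)
                            \<le> wnorm2 D \<alpha> tt N (\<lambda>n. \<theta> n - v n))"
  shows "\<forall>u\<in>L2 D. \<forall>p1 q1 p2 q2.
           is_proj D (Cset D \<alpha> tt N \<theta>) u p1 \<longrightarrow> is_proj D (bandlimited D) p1 q1 \<longrightarrow>
           is_proj D (Cset D \<alpha> tt N \<theta>bar) u p2 \<longrightarrow> is_proj D (bandlimited D) p2 q2 \<longrightarrow>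
           (AE t in lebesgue_on D. q1 t = q2 t)"
proof (intro ballI allI impI)
  fix u p1 q1 p2 q2
  assume u: "u \<in> L2 D"
    and P1: "is_proj D (Cset D \<alpha> tt N \<theta>) u p1" and Q1: "is_proj D (bandlimited D) p1 q1"
    and P2: "is_proj D (Cset D \<alpha> tt N \<theta>bar) u p2" and Q2: "is_proj D (bandlimited D) p2 q2"
  have "is_interval D" using hD by (metis is_interval_cc is_interval_univ)
  then have h: "hfun \<alpha> tt n \<in> L2 D" if "n \<in> {1..N}" for n
    using that by (intro hfun_L2 htD h\<alpha>) auto
  have orth: "\<And>m n. m \<in> {1..N} \<Longrightarrow> n \<in> {1..N} \<Longrightarrow> m \<noteq> n \<Longrightarrow>
      ip D (hfun \<alpha> tt m) (hfun \<alpha> tt n) = 0"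
    using htmono by (rule hfun_orthogonal)
  have "p1 \<in> Cset D \<alpha> tt N \<theta>" "p2 \<in> Cset D \<alpha> tt N \<theta>bar"
    using P1 P2 unfolding is_proj_def by simp_all
  then have p: "p1 \<in> L2 D" "p2 \<in> L2 D" unfolding Cset_def by simp_all
  show "AE t in lebesgue_on D. q1 t = q2 t"
  proof (rule is_proj_subspace_AE_eq[OF _ bandlimited_add_scaled p _ Q1 Q2])
    show "bandlimited D \<subseteq> L2 D" using bandlimited_L2 by blast
    show "ip D (\<lambda>t. p1 t - p2 t) b = 0" if "b \<in> bandlimited D" for b
      by (rule is_proj_Cset_diff_orthogonal_bandlimited[OF u h orth hbar P1 P2 that])
  qed
qed

end
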